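(* Let $G$ be a simple graph and let $G'$ be a minor of $G$, and let $k$ be an integer with $1\le k<|V(G')|$. Then $F_k(G')$ is a minor of $F_k(G)$.
   Context: For a simple graph $G=(V,E)$ on $n$ vertices and an integer $1\le k<n$, the $k$-token graph $F_k(G)$ is the graph whose vertices are all $k$-element subsets of $V$, two such subsets $A,B$ being adjacent whenever their symmetric difference $A\triangle B$ is a pair $\{a,b\}$ with $a$ adjacent to $b$ in $G$. A graph $H$ is a minor of $G$ if a graph isomorphic to $H$ can be obtained from $G$ by contracting edges, deleting edges, and deleting vertices (contractions producing simple graphs). *)

theory Defs
  imports Main
begin

type_synonym 'a graph = "'a set \<times> 'a set set"

definition verts :: "'a graph \<Rightarrow> 'a set" where
  "verts G = fst G"

definition edges :: "'a graph \<Rightarrow> 'a set set" where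
  "edges G = snd G"

definition simple_graph :: "'a graph \<Rightarrow> bool" where
  "simple_graph G \<longleftrightarrow> finite (verts G) \<and>
     (\<forall>e\<in>edges G. e \<subseteq> verts G \<and> card e = 2)"

definition delete_edge :: "'a set \<Rightarrow> 'a graph \<Rightarrow> 'a graph" where
  "delete_edge e G = (verts G, edges G - {e})"

definition delete_vertex :: "'a \<Rightarrow> 'a graph \<Rightarrow> 'a graph" where
  "delete_vertex v G = (verts G - {v}, {e \<in> edges G. v \<notin> e})"

text \<open>Contract the edge {u,v} into the vertex u (loops and parallel edges are discarded,
  so the result is simple).\<close>
definition contract_edge :: "'a \<Rightarrow> 'a \<Rightarrow> 'a graph \<Rightarrow> 'a graph" where
  "contract_edge u v G = (verts G - {v},
     {e \<in> edges G. v \<notin> e} \<union> {{u, w} | w. {v, w} \<in> edges G \<and> w \<noteq> u})"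

inductive obtainable :: "'a graph \<Rightarrow> 'a graph \<Rightarrow> bool" for G :: "'a graph" where
  refl: "obtainable G G"
| del_edge: "obtainable G H \<Longrightarrow> e \<in> edges H \<Longrightarrow> obtainable G (delete_edge e H)"
| del_vertex: "obtainable G H \<Longrightarrow> v \<in> verts H \<Longrightarrow> obtainable G (delete_vertex v H)"
| contract: "obtainable G H \<Longrightarrow> {u, v} \<in> edges H \<Longrightarrow> u \<noteq> v \<Longrightarrow>
              obtainable G (contract_edge u v H)"

definition graph_iso :: "'a graph \<Rightarrow> 'b graph \<Rightarrow> bool" where
  "graph_iso G H \<longleftrightarrow> simple_graph G \<and> simple_graph H \<and>
     (\<exists>f. bij_betw f (verts G) (verts H) \<and>
        (\<forall>x\<in>verts G. \<forall>y\<in>verts G. {x, y} \<in> edges G \<longleftrightarrow> {f x, f y} \<in> edges H))"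

definition minor :: "'b graph \<Rightarrow> 'a graph \<Rightarrow> bool" where
  "minor H G \<longleftrightarrow> (\<exists>G0. obtainable G G0 \<and> graph_iso H G0)"

definition token_graph :: "nat \<Rightarrow> 'a graph \<Rightarrow> 'a set graph" where
  "token_graph k G =
     ({A. A \<subseteq> verts G \<and> card A = k},
      {{A, B} | A B. A \<subseteq> verts G \<and> card A = k \<and> B \<subseteq> verts G \<and> card B = k \<and>
         (\<exists>a b. (A - B) \<union> (B - A) = {a, b} \<and> {a, b} \<in> edges G)})"

end

theory Submission
  imports Defs
begin

text \<open>
  Token graphs are compatible with each minor operation. Deleting an edge of \<open>G\<close> leaves a
  spanning subgraph of \<open>F\<^sub>k(G)\<close>, and deleting a vertex \<open>v\<close> deletes the \<open>k\<close>-sets containing \<open>v\<close>.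
  Contracting \<open>uv\<close> identifies \<open>v\<close> with \<open>u\<close>; on \<open>k\<close>-sets this is \<open>A \<mapsto> A[v := u]\<close>, which is
  injective away from the sets containing both \<open>u\<close> and \<open>v\<close>. Hence \<open>F\<^sub>k(G/uv)\<close> is obtained from
  \<open>F\<^sub>k(G)\<close> by deleting those sets and then contracting the edges \<open>{A, A[v := u]}\<close> for all \<open>A\<close>
  containing \<open>v\<close> but not \<open>u\<close>; these edges form a star forest, so they can be contracted one
  by one. Finally, an isomorphism of graphs induces one of their token graphs.
\<close>

lemma graph_eqI: "verts G = verts H \<Longrightarrow> edges G = edges H \<Longrightarrow> G = H"
  by (simp add: verts_def edges_def prod_eq_iff)

lemma verts_delete_edge [simp]: "verts (delete_edge e H) = verts H"
  and edges_delete_edge [simp]: "edges (delete_edge e H) = edges H - {e}"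
  by (simp_all add: delete_edge_def verts_def edges_def)

lemma verts_delete_vertex [simp]: "verts (delete_vertex v H) = verts H - {v}"
  and edges_delete_vertex [simp]: "edges (delete_vertex v H) = {e \<in> edges H. v \<notin> e}"
  by (simp_all add: delete_vertex_def verts_def edges_def)

lemma simple_graph_delete_edge: "simple_graph H \<Longrightarrow> simple_graph (delete_edge e H)"
  unfolding simple_graph_def delete_edge_def verts_def edges_def by simp

lemma simple_graph_delete_vertex: "simple_graph H \<Longrightarrow> simple_graph (delete_vertex v H)"
  unfolding simple_graph_def delete_vertex_def verts_def edges_def by auto

lemma simple_graph_edge_card: "simple_graph H \<Longrightarrow> e \<in> edges H \<Longrightarrow> card e = 2"
  by (simp add: simple_graph_def)

lemma simple_graph_edge_subset: "simple_graph H \<Longrightarrow> e \<in> edges H \<Longrightarrow> e \<subseteq> verts H"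
  by (simp add: simple_graph_def)

lemma simple_graph_finite_edges:
  assumes "simple_graph H" shows "finite (edges H)"
proof -
  have "edges H \<subseteq> Pow (verts H)" using assms by (auto simp: simple_graph_def)
  then show ?thesis using assms by (simp add: simple_graph_def finite_subset)
qed

section \<open>Images of graphs under vertex maps\<close>

text \<open>Identify vertices along \<open>f\<close>, discarding edges that collapse to a single vertex; both
  contractions and isomorphisms are of this form.\<close>
definition map_graph :: "('a \<Rightarrow> 'b) \<Rightarrow> 'a graph \<Rightarrow> 'b graph" where
  "map_graph f H = (f ` verts H, {f ` e | e. e \<in> edges H \<and> card (f ` e) = 2})"

lemma verts_map_graph [simp]: "verts (map_graph f H) = f ` verts H"
  by (simp add: map_graph_def verts_def)

lemma edges_map_graph: "edges (map_graph f H) = {f ` e | e. e \<in> edges H \<and> card (f ` e) = 2}"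
  by (simp add: map_graph_def edges_def)

lemma edges_map_graphI:
  "e \<in> edges H \<Longrightarrow> card (f ` e) = 2 \<Longrightarrow> f ` e \<in> edges (map_graph f H)"
  unfolding edges_map_graph by blast

lemma edges_map_graph_lift:
  assumes "simple_graph H" "{a, b} \<in> edges (map_graph f H)"
  obtains a' b' where "{a', b'} \<in> edges H" "f a' = a" "f b' = b"
proof -
  obtain e where e: "{a, b} = f ` e" "e \<in> edges H" "card (f ` e) = 2"
    using assms(2) unfolding edges_map_graph by blast
  obtain x y where "e = {x, y}"
    using simple_graph_edge_card[OF assms(1) e(2)] by (meson card_2_iff)
  then have "{a, b} = {f x, f y}" "{x, y} \<in> edges H" "{y, x} \<in> edges H"
    using e by (auto simp: insert_commute)
  then show ?thesis using that by (metis doubleton_eq_iff)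
qed

lemma simple_graph_map_graph: "simple_graph H \<Longrightarrow> simple_graph (map_graph f H)"
  by (auto simp: simple_graph_def map_graph_def verts_def edges_def)

lemma map_graph_cong:
  assumes "simple_graph H" "\<And>x. x \<in> verts H \<Longrightarrow> f x = g x"
  shows "map_graph f H = map_graph g H"
proof -
  have "f ` e = g ` e" if "e \<in> edges H" for e
    using simple_graph_edge_subset[OF assms(1) that] assms(2) by (intro image_cong) auto
  then have "{f ` e | e. e \<in> edges H \<and> card (f ` e) = 2} = {g ` e | e. e \<in> edges H \<and> card (g ` e) = 2}"
    by metis
  moreover have "f ` verts H = g ` verts H" using assms(2) by (intro image_cong) auto
  ultimately show ?thesis by (simp add: map_graph_def)
qed

lemma map_graph_id:
  assumes "simple_graph H" shows "map_graph id H = H"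
proof -
  have "{id ` e | e. e \<in> edges H \<and> card (id ` e) = 2} = edges H"
    using assms by (auto simp: simple_graph_def)
  then show ?thesis by (simp add: map_graph_def verts_def edges_def)
qed

lemma map_graph_comp:
  assumes "simple_graph H" shows "map_graph g (map_graph f H) = map_graph (g \<circ> f) H"
proof -
  have card_f: "card (f ` e) = 2" if "e \<in> edges H" "card (g ` f ` e) = 2" for e
  proof -
    have "finite e" "card e = 2" using assms that by (auto simp: simple_graph_def intro: card_ge_0_finite)
    then have "card (g ` f ` e) \<le> card (f ` e)" "card (f ` e) \<le> 2"
      by (metis card_image_le finite_imageI)+
    then show ?thesis using that by linarith
  qed
  have "{g ` e' | e'. e' \<in> edges (map_graph f H) \<and> card (g ` e') = 2}
      = {(g \<circ> f) ` e | e. e \<in> edges H \<and> card ((g \<circ> f) ` e) = 2}"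
    unfolding edges_map_graph image_comp[symmetric] using card_f by blast
  then show ?thesis
    by (simp add: map_graph_def[of g] map_graph_def[of "g \<circ> f"] edges_def[symmetric] image_comp)
qed

lemma graph_iso_map_graph:
  assumes H: "simple_graph H" and g: "inj_on g (verts H)"
  shows "graph_iso H (map_graph g H)"
proof -
  have "{x, y} \<in> edges H \<longleftrightarrow> {g x, g y} \<in> edges (map_graph g H)"
    if "x \<in> verts H" "y \<in> verts H" for x y
  proof
    assume xy: "{x, y} \<in> edges H"
    have "card (g ` {x, y}) = card {x, y}"
      using that by (intro card_image inj_on_subset[OF g]) auto
    then have "card (g ` {x, y}) = 2" using simple_graph_edge_card[OF H xy] by simp
    then show "{g x, g y} \<in> edges (map_graph g H)" using edges_map_graphI[OF xy] by simp
  next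
    assume "{g x, g y} \<in> edges (map_graph g H)"
    then obtain e where "g ` {x, y} = g ` e" "e \<in> edges H" unfolding edges_map_graph by auto
    moreover from this have "e = {x, y}"
      using inj_on_image_eq_iff[OF g, of "{x, y}" e] that simple_graph_edge_subset[OF H] by auto
    ultimately show "{x, y} \<in> edges H" by simp
  qed
  moreover have "bij_betw g (verts H) (verts (map_graph g H))"
    using inj_on_imp_bij_betw[OF g] by simp
  ultimately show ?thesis unfolding graph_iso_def using H simple_graph_map_graph[OF H] by blast
qed

lemma graph_iso_imp_map_graph:
  assumes "graph_iso G1 G2"
  obtains g where "inj_on g (verts G1)" "G2 = map_graph g G1"
proof -
  obtain g where bij: "bij_betw g (verts G1) (verts G2)"
    and edge_iff: "\<And>x y. x \<in> verts G1 \<Longrightarrow> y \<in> verts G1 \<Longrightarrow> {x, y} \<in> edges G1 \<longleftrightarrow> {g x, g y} \<in> edges G2"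
    using assms unfolding graph_iso_def by blast
  have G1: "simple_graph G1" and G2: "simple_graph G2" using assms by (simp_all add: graph_iso_def)
  have inj: "inj_on g (verts G1)" and verts: "g ` verts G1 = verts G2"
    using bij by (simp_all add: bij_betw_def)
  have "edges G2 = {g ` e | e. e \<in> edges G1 \<and> card (g ` e) = 2}"
  proof (intro equalityI subsetI)
    fix e' assume e': "e' \<in> edges G2"
    then obtain x' y' where "e' = {x', y'}"
      using simple_graph_edge_card[OF G2] by (meson card_2_iff)
    moreover from this have "x' \<in> g ` verts G1" "y' \<in> g ` verts G1"
      using simple_graph_edge_subset[OF G2 e'] verts by auto
    then obtain x y where "x \<in> verts G1" "x' = g x" "y \<in> verts G1" "y' = g y"
      by (meson imageE)
    ultimately have "e' = g ` {x, y}" "{x, y} \<in> edges G1" "card e' = 2"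
      using e' edge_iff simple_graph_edge_card[OF G2 e'] by auto
    then show "e' \<in> {g ` e | e. e \<in> edges G1 \<and> card (g ` e) = 2}" by blast
  next
    fix e' assume "e' \<in> {g ` e | e. e \<in> edges G1 \<and> card (g ` e) = 2}"
    then obtain e where e: "e' = g ` e" "e \<in> edges G1" by blast
    then obtain x y where "e = {x, y}"
      using simple_graph_edge_card[OF G1] by (meson card_2_iff)
    moreover from this have "x \<in> verts G1" "y \<in> verts G1"
      using simple_graph_edge_subset[OF G1 e(2)] by auto
    ultimately show "e' \<in> edges G2" using e edge_iff by simp
  qed
  then have "G2 = map_graph g G1"
    using verts by (intro graph_eqI) (simp_all add: edges_map_graph)
  with inj show ?thesis by (rule that)
qed

lemma image_id_upd_notin: "v \<notin> A \<Longrightarrow> id(v := u) ` A = A"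
  by auto

lemma image_id_upd_in: "v \<in> A \<Longrightarrow> id(v := u) ` A = insert u (A - {v})"
  by auto

lemma inj_on_id_upd: "u \<notin> A \<or> v \<notin> A \<Longrightarrow> inj_on (id(v := u)) A"
  by (auto intro!: inj_onI split: if_splits)

lemma edges_contract_edge:
  assumes H: "simple_graph H"
  shows "edges (contract_edge u v H) = edges (map_graph (id(v := u)) H)"
proof (intro equalityI subsetI)
  let ?\<phi> = "id(v := u)"
  fix e' assume "e' \<in> edges (contract_edge u v H)"
  then consider "e' \<in> edges H" "v \<notin> e'" | w where "e' = {u, w}" "{v, w} \<in> edges H" "w \<noteq> u"
    by (auto simp: contract_edge_def edges_def)
  then show "e' \<in> edges (map_graph ?\<phi> H)"
  proof cases
    case 1
    have "?\<phi> ` e' = e'" by (rule image_id_upd_notin[OF 1(2)])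
    then show ?thesis
      using edges_map_graphI[of e' H ?\<phi>] 1(1) simple_graph_edge_card[OF H] by simp
  next
    case 2
    then have "w \<noteq> v" using simple_graph_edge_card[OF H] by fastforce
    then have "?\<phi> ` {v, w} = e'" "card e' = 2" using 2 by auto
    then show ?thesis using edges_map_graphI[of "{v, w}" H ?\<phi>] 2 by simp
  qed
next
  let ?\<phi> = "id(v := u)"
  fix e' assume "e' \<in> edges (map_graph ?\<phi> H)"
  then obtain e where e: "e' = ?\<phi> ` e" "e \<in> edges H" "card (?\<phi> ` e) = 2"
    unfolding edges_map_graph by blast
  show "e' \<in> edges (contract_edge u v H)"
  proof (cases "v \<in> e")
    case False
    then have "e' = e" using e(1) image_id_upd_notin by metis
    then show ?thesis using e(2) False by (auto simp: contract_edge_def edges_def)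
  next
    case True
    then obtain w where w: "e = {v, w}" "w \<noteq> v"
      using simple_graph_edge_card[OF H e(2)] by (metis card_2_iff insert_commute insert_iff singletonD)
    then have "e' = {u, w}" using e(1) by auto
    moreover from this have "w \<noteq> u" using e(1,3) by auto
    ultimately show ?thesis using w e(2) by (auto simp: contract_edge_def edges_def)
  qed
qed

lemma contract_edge_eq_map_graph:
  assumes "simple_graph H" "u \<in> verts H" "u \<noteq> v"
  shows "contract_edge u v H = map_graph (id(v := u)) H"
proof (rule graph_eqI)
  have "verts H - {v} = id(v := u) ` verts H" using assms(2,3) by (auto simp: image_iff)
  then show "verts (contract_edge u v H) = verts (map_graph (id(v := u)) H)"
    by (simp add: contract_edge_def verts_def[of "(_, _)"])
qed (rule edges_contract_edge[OF assms(1)])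

section \<open>Minor operations\<close>

lemma obtainable_trans:
  assumes "obtainable G H" "obtainable H K" shows "obtainable G K"
  using assms(2)
proof induction
  case refl
  show ?case by (rule assms(1))
qed (simp_all add: obtainable.intros)

lemma obtainable_simple_graph:
  assumes "obtainable G H" "simple_graph G" shows "simple_graph H"
  using assms(1)
proof induction
  case (contract H u v)
  then have "u \<in> verts H" using simple_graph_edge_subset by blast
  then show ?case
    using contract by (simp add: contract_edge_eq_map_graph simple_graph_map_graph)
qed (use assms(2) simple_graph_delete_edge simple_graph_delete_vertex in auto)

definition delete_vertices :: "'a set \<Rightarrow> 'a graph \<Rightarrow> 'a graph" where
  "delete_vertices D H = (verts H - D, {e \<in> edges H. e \<inter> D = {}})"

lemma verts_delete_vertices [simp]: "verts (delete_vertices D H) = verts H - D"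
  by (simp add: delete_vertices_def verts_def)

lemma edges_delete_vertices [simp]: "edges (delete_vertices D H) = {e \<in> edges H. e \<inter> D = {}}"
  by (simp add: delete_vertices_def edges_def)

lemma obtainable_delete_vertices:
  assumes "finite D" "D \<subseteq> verts H"
  shows "obtainable H (delete_vertices D H)"
  using assms
proof (induction D rule: finite_induct)
  case empty
  show ?case using obtainable.refl by (simp add: delete_vertices_def verts_def edges_def)
next
  case (insert x D)
  have "obtainable H (delete_vertex x (delete_vertices D H))"
    using insert by (intro obtainable.del_vertex) auto
  moreover have "delete_vertex x (delete_vertices D H) = delete_vertices (insert x D) H"
    by (auto simp: delete_vertex_def delete_vertices_def verts_def edges_def)
  ultimately show ?case by simp
qed

lemma obtainable_delete_edges:
  assumes "finite F" shows "obtainable H (verts H, edges H - F)"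
  using assms
proof (induction F rule: finite_induct)
  case empty
  show ?case using obtainable.refl by (simp add: verts_def edges_def)
next
  case (insert y F)
  show ?case
  proof (cases "y \<in> edges H - F")
    case True
    then have "obtainable H (delete_edge y (verts H, edges H - F))"
      using insert.IH by (intro obtainable.del_edge) (auto simp: edges_def)
    moreover have "delete_edge y (verts H, edges H - F) = (verts H, edges H - insert y F)"
      by (auto simp: delete_edge_def verts_def edges_def)
    ultimately show ?thesis by simp
  next
    case False
    then have "edges H - insert y F = edges H - F" by blast
    then show ?thesis using insert.IH by simp
  qed
qed

lemma obtainable_spanning_subgraph:
  assumes "simple_graph H" "verts H' = verts H" "edges H' \<subseteq> edges H"
  shows "obtainable H H'"
proof -
  have "obtainable H (verts H, edges H - (edges H - edges H'))"
    using obtainable_delete_edges simple_graph_finite_edges[OF assms(1)] by blast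
  moreover have "(verts H, edges H - (edges H - edges H')) = H'"
    using assms(2,3) by (simp add: double_diff verts_def edges_def prod_eq_iff)
  ultimately show ?thesis by simp
qed

text \<open>The edges \<open>{x, f x}\<close> with \<open>x \<in> S\<close> form a star forest; contracting them one at a time
  merges every \<open>x \<in> S\<close> into \<open>f x\<close>.\<close>
lemma obtainable_map_graph:
  assumes "finite S" "simple_graph H"
    "\<And>x. x \<in> S \<Longrightarrow> f x \<notin> S \<and> {x, f x} \<in> edges H"
    "\<And>x. x \<in> verts H - S \<Longrightarrow> f x = x"
  shows "obtainable H (map_graph f H)"
  using assms(1,3,4)
proof (induction S arbitrary: f rule: finite_induct)
  case empty
  then have "map_graph f H = map_graph id H" by (intro map_graph_cong[OF assms(2)]) auto
  then show ?case using map_graph_id[OF assms(2)] obtainable.refl by metis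
next
  case (insert x S f)
  define g where "g = f(x := x)"
  have x_edge: "f x \<notin> insert x S" "{x, f x} \<in> edges H" using insert.prems(1) by auto
  then have x_verts: "x \<in> verts H" "f x \<in> verts H"
    using simple_graph_edge_subset[OF assms(2)] by auto
  have "obtainable H (map_graph g H)"
    using insert.prems insert.hyps(2) by (intro insert.IH) (auto simp: g_def)
  have g_fixes: "g x = x" "g (f x) = f x"
    using x_edge x_verts insert.prems(2) by (auto simp: g_def)
  have "{f x, x} \<in> edges (map_graph g H)"
  proof -
    have "g ` {x, f x} = {f x, x}" "card {f x, x} = 2" using g_fixes x_edge(1) by auto
    then show ?thesis using edges_map_graphI[OF x_edge(2), of g] by simp
  qed
  moreover have "f x \<in> verts (map_graph g H)"
    using g_fixes(2) x_verts(2) by (metis image_eqI verts_map_graph)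
  moreover have "x \<noteq> f x" using x_edge(1) by auto
  ultimately have "obtainable (map_graph g H) (contract_edge (f x) x (map_graph g H))"
    by (intro obtainable.contract[OF obtainable.refl]) auto
  also have "contract_edge (f x) x (map_graph g H) = map_graph (id(x := f x)) (map_graph g H)"
    using \<open>f x \<in> verts (map_graph g H)\<close> \<open>x \<noteq> f x\<close>
    by (intro contract_edge_eq_map_graph simple_graph_map_graph assms(2)) auto
  also have "\<dots> = map_graph (id(x := f x) \<circ> g) H" by (rule map_graph_comp[OF assms(2)])
  also have "\<dots> = map_graph f H"
  proof (rule map_graph_cong[OF assms(2)])
    fix y assume "y \<in> verts H"
    have "f y \<noteq> x" if "y \<noteq> x"
    proof (cases "y \<in> S")
      case True
      then show ?thesis using insert.prems(1)[of y] by blast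
    next
      case False
      then show ?thesis using insert.prems(2)[of y] \<open>y \<in> verts H\<close> that by simp
    qed
    then show "(id(x := f x) \<circ> g) y = f y" by (auto simp: g_def)
  qed
  finally show ?case using obtainable_trans \<open>obtainable H (map_graph g H)\<close> by blast
qed

section \<open>Token adjacency\<close>

definition token_adj :: "'a set set \<Rightarrow> 'a set \<Rightarrow> 'a set \<Rightarrow> bool" where
  "token_adj E A B \<longleftrightarrow>
     (\<exists>C a b. A = insert a C \<and> B = insert b C \<and> a \<notin> C \<and> b \<notin> C \<and> {a, b} \<in> E)"

lemma token_adjI: "a \<notin> C \<Longrightarrow> b \<notin> C \<Longrightarrow> {a, b} \<in> E \<Longrightarrow> token_adj E (insert a C) (insert b C)"
  unfolding token_adj_def by blast

lemma token_adjE: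
  assumes "token_adj E A B"
  obtains C a b where "A = insert a C" "B = insert b C" "a \<notin> C" "b \<notin> C" "{a, b} \<in> E"
  using assms unfolding token_adj_def by blast

lemma token_adj_mono: "token_adj E A B \<Longrightarrow> E \<subseteq> E' \<Longrightarrow> token_adj E' A B"
  unfolding token_adj_def by blast

lemma token_adj_neq:
  assumes "token_adj E A B" "\<And>e. e \<in> E \<Longrightarrow> card e = 2" shows "A \<noteq> B"
proof -
  obtain C a b where "A = insert a C" "B = insert b C" "a \<notin> C" "b \<notin> C" "{a, b} \<in> E"
    using assms(1) by (rule token_adjE)
  moreover from this have "a \<noteq> b" using assms(2) by fastforce
  ultimately show ?thesis by blast
qed

lemma token_adj_iff_symmetric_difference:
  assumes "finite A" "finite B" "card A = card B" "\<And>e. e \<in> E \<Longrightarrow> card e = 2"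
  shows "(\<exists>a b. (A - B) \<union> (B - A) = {a, b} \<and> {a, b} \<in> E) \<longleftrightarrow> token_adj E A B"
proof
  assume "\<exists>a b. (A - B) \<union> (B - A) = {a, b} \<and> {a, b} \<in> E"
  then obtain a b where ab: "(A - B) \<union> (B - A) = {a, b}" "{a, b} \<in> E" by blast
  have "a \<noteq> b" using assms(4)[OF ab(2)] by fastforce
  have "card (A - B) = card (B - A)"
    using assms(1-3) by (simp add: card_Diff_subset_Int inf_commute)
  moreover have "card ((A - B) \<union> (B - A)) = card (A - B) + card (B - A)"
    using assms(1,2) by (intro card_Un_disjoint) auto
  then have "card (A - B) + card (B - A) = 2" using ab(1) \<open>a \<noteq> b\<close> by simp
  ultimately obtain x y where x: "A - B = {x}" and y: "B - A = {y}"
    by (metis card_1_singletonE add_self_div_2 div_self zero_neq_numeral)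
  then have "{x, y} = {a, b}" using ab(1) by (simp add: insert_commute)
  moreover have "A = insert x (A \<inter> B)" "B = insert y (A \<inter> B)" "x \<notin> A \<inter> B" "y \<notin> A \<inter> B"
    using x y by blast+
  ultimately show "token_adj E A B" using ab(2) token_adjI by metis
next
  assume "token_adj E A B"
  then obtain C a b where h: "A = insert a C" "B = insert b C" "a \<notin> C" "b \<notin> C" "{a, b} \<in> E"
    by (rule token_adjE)
  moreover from this have "a \<noteq> b" using assms(4) by fastforce
  ultimately have "(A - B) \<union> (B - A) = {a, b}" by blast
  then show "\<exists>a b. (A - B) \<union> (B - A) = {a, b} \<and> {a, b} \<in> E" using h(5) by blast
qed

lemma token_adj_image:
  assumes "token_adj (edges H) A B" "inj_on f A" "inj_on f B" "f ` A \<noteq> f ` B"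
  shows "token_adj (edges (map_graph f H)) (f ` A) (f ` B)"
proof -
  obtain C a b where A: "A = insert a C" and B: "B = insert b C"
    and ab: "a \<notin> C" "b \<notin> C" "{a, b} \<in> edges H"
    using assms(1) by (rule token_adjE)
  have "f a \<notin> f ` C" "f b \<notin> f ` C"
    using assms(2,3) ab(1,2) unfolding A B by auto
  moreover have "f a \<noteq> f b" using assms(4) unfolding A B by auto
  then have "f ` {a, b} \<in> edges (map_graph f H)" using ab(3) by (intro edges_map_graphI) auto
  ultimately show ?thesis unfolding A B image_insert image_empty by (rule token_adjI)
qed

lemma token_adj_map_graph_iff:
  assumes H: "simple_graph H" and g: "inj_on g (verts H)" and AB: "A \<subseteq> verts H" "B \<subseteq> verts H"
  shows "token_adj (edges (map_graph g H)) (g ` A) (g ` B) \<longleftrightarrow> token_adj (edges H) A B"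
proof
  assume adj: "token_adj (edges (map_graph g H)) (g ` A) (g ` B)"
  define g' where "g' = the_inv_into (verts H) g"
  have g'_image: "g' ` g ` C = C" if "C \<subseteq> verts H" for C
  proof -
    have "g' ` g ` C = (\<lambda>x. g' (g x)) ` C" by (simp add: image_image)
    also have "\<dots> = id ` C"
      using that by (intro image_cong) (auto simp: g'_def the_inv_into_f_f[OF g])
    finally show ?thesis by simp
  qed
  have "map_graph g' (map_graph g H) = map_graph id H"
    unfolding map_graph_comp[OF H] using g by (intro map_graph_cong[OF H]) (simp add: g'_def the_inv_into_f_f)
  then have inverse: "map_graph g' (map_graph g H) = H" by (simp add: map_graph_id[OF H])
  have "g ` A \<noteq> g ` B"
    by (rule token_adj_neq[OF adj simple_graph_edge_card[OF simple_graph_map_graph[OF H]]])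
  then have "g' ` g ` A \<noteq> g' ` g ` B" unfolding g'_image[OF AB(1)] g'_image[OF AB(2)] by auto
  moreover have "inj_on g' (g ` A)" "inj_on g' (g ` B)"
    using inj_on_subset[OF inj_on_the_inv_into[OF g]] AB unfolding g'_def by (simp_all add: image_mono)
  ultimately have "token_adj (edges (map_graph g' (map_graph g H))) (g' ` g ` A) (g' ` g ` B)"
    by (intro token_adj_image[OF adj])
  then show "token_adj (edges H) A B" by (simp only: inverse g'_image[OF AB(1)] g'_image[OF AB(2)])
next
  assume adj: "token_adj (edges H) A B"
  then have "A \<noteq> B" by (rule token_adj_neq[OF _ simple_graph_edge_card[OF H]])
  then have "g ` A \<noteq> g ` B" using inj_on_image_eq_iff[OF g AB] by simp
  moreover have "inj_on g A" "inj_on g B" using inj_on_subset[OF g] AB by simp_all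
  ultimately show "token_adj (edges (map_graph g H)) (g ` A) (g ` B)"
    by (intro token_adj_image[OF adj])
qed

section \<open>Token graphs of minors\<close>

lemma verts_token_graph: "verts (token_graph k H) = {A. A \<subseteq> verts H \<and> card A = k}"
  by (simp add: token_graph_def verts_def)

lemma edges_token_graph:
  assumes "simple_graph H"
  shows "edges (token_graph k H) = {{A, B} | A B. A \<in> verts (token_graph k H) \<and>
           B \<in> verts (token_graph k H) \<and> token_adj (edges H) A B}"
proof -
  have eq: "(A \<subseteq> verts H \<and> card A = k \<and> B \<subseteq> verts H \<and> card B = k \<and>
        (\<exists>a b. (A - B) \<union> (B - A) = {a, b} \<and> {a, b} \<in> edges H)) \<longleftrightarrow>
      (A \<in> verts (token_graph k H) \<and> B \<in> verts (token_graph k H) \<and> token_adj (edges H) A B)"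
    for A B
  proof -
    have "(\<exists>a b. (A - B) \<union> (B - A) = {a, b} \<and> {a, b} \<in> edges H) \<longleftrightarrow> token_adj (edges H) A B"
      if "A \<subseteq> verts H" "B \<subseteq> verts H" "card A = k" "card B = k"
      using that assms finite_subset simple_graph_edge_card
      by (intro token_adj_iff_symmetric_difference) (auto simp: simple_graph_def)
    then show ?thesis by (auto simp: verts_token_graph)
  qed
  have "edges (token_graph k H) = {{A, B} | A B. A \<subseteq> verts H \<and> card A = k \<and> B \<subseteq> verts H \<and>
      card B = k \<and> (\<exists>a b. (A - B) \<union> (B - A) = {a, b} \<and> {a, b} \<in> edges H)}"
    by (simp add: token_graph_def edges_def)
  also have "\<dots> = {{A, B} | A B. A \<in> verts (token_graph k H) \<and>
      B \<in> verts (token_graph k H) \<and> token_adj (edges H) A B}"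
    by (simp only: eq)
  finally show ?thesis .
qed

lemma token_graph_edgeI:
  "simple_graph H \<Longrightarrow> A \<in> verts (token_graph k H) \<Longrightarrow> B \<in> verts (token_graph k H) \<Longrightarrow>
   token_adj (edges H) A B \<Longrightarrow> {A, B} \<in> edges (token_graph k H)"
  by (auto simp: edges_token_graph)

lemma token_graph_edgeE:
  assumes "simple_graph H" "X \<in> edges (token_graph k H)"
  obtains A B where "X = {A, B}" "A \<in> verts (token_graph k H)" "B \<in> verts (token_graph k H)"
    "token_adj (edges H) A B"
  using assms by (auto simp: edges_token_graph)

lemma simple_graph_token_graph:
  assumes "simple_graph H" shows "simple_graph (token_graph k H)"
proof -
  have "finite (verts (token_graph k H))"
    using assms by (simp add: simple_graph_def verts_token_graph)
  moreover have "X \<subseteq> verts (token_graph k H) \<and> card X = 2" if X: "X \<in> edges (token_graph k H)" for X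
  proof -
    obtain A B where "X = {A, B}" "A \<in> verts (token_graph k H)" "B \<in> verts (token_graph k H)"
      "token_adj (edges H) A B"
      using assms X by (rule token_graph_edgeE)
    moreover from this(4) have "A \<noteq> B" by (rule token_adj_neq[OF _ simple_graph_edge_card[OF assms]])
    ultimately show ?thesis by simp
  qed
  ultimately show ?thesis by (simp add: simple_graph_def)
qed

lemma token_graph_delete_edge:
  assumes "simple_graph H"
  shows "verts (token_graph k (delete_edge e H)) = verts (token_graph k H)"
    and "edges (token_graph k (delete_edge e H)) \<subseteq> edges (token_graph k H)"
proof -
  show verts_eq: "verts (token_graph k (delete_edge e H)) = verts (token_graph k H)"
    by (simp add: verts_token_graph)
  show "edges (token_graph k (delete_edge e H)) \<subseteq> edges (token_graph k H)"
  proof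
    fix X assume X: "X \<in> edges (token_graph k (delete_edge e H))"
    obtain A B where AB: "X = {A, B}" "A \<in> verts (token_graph k H)" "B \<in> verts (token_graph k H)"
        and "token_adj (edges (delete_edge e H)) A B"
      using token_graph_edgeE[OF simple_graph_delete_edge[OF assms] X] unfolding verts_eq .
    then have "token_adj (edges H) A B" by (auto elim: token_adj_mono)
    then show "X \<in> edges (token_graph k H)" using token_graph_edgeI[OF assms AB(2,3)] AB(1) by simp
  qed
qed

lemma token_graph_delete_vertex:
  assumes "simple_graph H"
  shows "token_graph k (delete_vertex v H) =
    delete_vertices {A \<in> verts (token_graph k H). v \<in> A} (token_graph k H)"
    (is "_ = delete_vertices ?D _")
proof -
  have H': "simple_graph (delete_vertex v H)" by (rule simple_graph_delete_vertex[OF assms])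
  have adj: "token_adj {e \<in> edges H. v \<notin> e} A B \<longleftrightarrow> token_adj (edges H) A B"
    if "v \<notin> A" "v \<notin> B" for A B
    using that unfolding token_adj_def by blast
  have "edges (token_graph k (delete_vertex v H)) = {X \<in> edges (token_graph k H). X \<inter> ?D = {}}"
  proof (intro equalityI subsetI)
    fix X assume X: "X \<in> edges (token_graph k (delete_vertex v H))"
    obtain A B where AB: "X = {A, B}" "A \<in> verts (token_graph k (delete_vertex v H))"
        "B \<in> verts (token_graph k (delete_vertex v H))" "token_adj (edges (delete_vertex v H)) A B"
      by (rule token_graph_edgeE[OF H' X])
    then have "v \<notin> A" "v \<notin> B" by (auto simp: verts_token_graph)
    then have "X \<in> edges (token_graph k H)"
      using AB adj token_graph_edgeI[OF assms, of A k B] by (auto simp: verts_token_graph)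
    then show "X \<in> {X \<in> edges (token_graph k H). X \<inter> ?D = {}}"
      using AB \<open>v \<notin> A\<close> \<open>v \<notin> B\<close> by auto
  next
    fix X assume X: "X \<in> {X \<in> edges (token_graph k H). X \<inter> ?D = {}}"
    obtain A B where AB: "X = {A, B}" "A \<in> verts (token_graph k H)" "B \<in> verts (token_graph k H)"
        "token_adj (edges H) A B"
      using token_graph_edgeE[OF assms] X by blast
    then have "v \<notin> A" "v \<notin> B" using X by blast+
    then show "X \<in> edges (token_graph k (delete_vertex v H))"
      using AB adj token_graph_edgeI[OF H', of A k B] by (auto simp: verts_token_graph)
  qed
  moreover have "verts (token_graph k (delete_vertex v H)) = verts (token_graph k H) - ?D"
    by (auto simp: verts_token_graph)
  ultimately show ?thesis by (intro graph_eqI) (simp_all only: verts_delete_vertices edges_delete_vertices)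
qed

lemma image_id_upd_token_graph:
  assumes "u \<in> verts H" "A \<in> verts (token_graph k H)" "u \<notin> A \<or> v \<notin> A"
  shows "id(v := u) ` A \<in> verts (token_graph k (map_graph (id(v := u)) H))"
proof -
  have "card (id(v := u) ` A) = card A" using inj_on_id_upd[OF assms(3)] by (rule card_image)
  moreover have "id(v := u) ` A \<subseteq> id(v := u) ` verts H"
    using assms(2) by (auto simp: verts_token_graph)
  ultimately show ?thesis using assms(2) by (simp add: verts_token_graph)
qed

lemma token_adj_identify_lift:
  fixes H :: "'a graph" and k :: nat
  assumes H: "simple_graph H" and u: "u \<in> verts H" "u \<noteq> v"
    and adj: "token_adj (edges (map_graph (id(v := u)) H)) A B"
    and AB: "A \<in> verts (token_graph k (map_graph (id(v := u)) H))"
      "B \<in> verts (token_graph k (map_graph (id(v := u)) H))"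
  obtains A' B' where "{A', B'} \<in> edges (token_graph k H)"
    "\<not> (u \<in> A' \<and> v \<in> A')" "\<not> (u \<in> B' \<and> v \<in> B')" "id(v := u) ` A' = A" "id(v := u) ` B' = B"
proof -
  let ?\<phi> = "id(v := u)"
  obtain C a b where A: "A = insert a C" and B: "B = insert b C"
    and ab: "a \<notin> C" "b \<notin> C" "{a, b} \<in> edges (map_graph ?\<phi> H)"
    using adj by (rule token_adjE)
  obtain a' b' where ab': "{a', b'} \<in> edges H" "?\<phi> a' = a" "?\<phi> b' = b"
    using H ab(3) by (rule edges_map_graph_lift)
  have "?\<phi> ` verts H = verts H - {v}" using u by (auto simp: image_iff)
  then have "A \<subseteq> verts H - {v}" "B \<subseteq> verts H - {v}" using AB by (simp_all add: verts_token_graph)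
  then have "v \<notin> A" "v \<notin> B" "C \<subseteq> verts H" unfolding A B by auto
  then have "finite C" using H finite_subset by (auto simp: simple_graph_def)
  \<comment> \<open>A token on the merged vertex u is lifted back to u or to v, whichever the edge needs.\<close>
  have lift: "x' \<notin> C" "?\<phi> ` insert x' C = insert x C" "card (insert x' C) = card (insert x C)"
    "\<not> (u \<in> insert x' C \<and> v \<in> insert x' C)"
    if "v \<notin> insert x C" "x \<notin> C" "?\<phi> x' = x" for x x'
  proof -
    have "x' = x \<or> (x' = v \<and> x = u)" using that(3) by (auto split: if_splits)
    then show "x' \<notin> C" "?\<phi> ` insert x' C = insert x C" "card (insert x' C) = card (insert x C)"
      "\<not> (u \<in> insert x' C \<and> v \<in> insert x' C)"
      using that \<open>finite C\<close> by auto
  qed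
  note lift_a = lift[OF \<open>v \<notin> A\<close>[unfolded A] ab(1) ab'(2)]
  note lift_b = lift[OF \<open>v \<notin> B\<close>[unfolded B] ab(2) ab'(3)]
  have "a' \<in> verts H" "b' \<in> verts H" using simple_graph_edge_subset[OF H ab'(1)] by auto
  then have "insert a' C \<in> verts (token_graph k H)" "insert b' C \<in> verts (token_graph k H)"
    using AB lift_a(3) lift_b(3) \<open>C \<subseteq> verts H\<close> unfolding A B by (auto simp: verts_token_graph)
  moreover have "token_adj (edges H) (insert a' C) (insert b' C)"
    using lift_a(1) lift_b(1) ab'(1) by (rule token_adjI)
  ultimately have "{insert a' C, insert b' C} \<in> edges (token_graph k H)"
    by (rule token_graph_edgeI[OF H])
  then show ?thesis using that lift_a(2,4) lift_b(2,4) unfolding A B by blast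
qed

lemma token_graph_identify_vertices:
  fixes H :: "'a graph" and k :: nat
  assumes H: "simple_graph H" and u: "u \<in> verts H" "u \<noteq> v"
  defines "\<phi> \<equiv> id(v := u)"
    and "D \<equiv> {A \<in> verts (token_graph k H). u \<in> A \<and> v \<in> A}"
  shows "token_graph k (map_graph \<phi> H) = map_graph ((`) \<phi>) (delete_vertices D (token_graph k H))"
    (is "?Tc = map_graph _ ?T1")
proof -
  have Hc: "simple_graph (map_graph \<phi> H)" by (rule simple_graph_map_graph[OF H])
  have verts_Hc: "\<phi> ` verts H = verts H - {v}"
    using u by (auto simp: \<phi>_def image_iff)
  have image_verts: "\<phi> ` A \<in> verts ?Tc" "inj_on \<phi> A" if "A \<in> verts ?T1" for A
  proof -
    have A: "A \<in> verts (token_graph k H)" and sep: "u \<notin> A \<or> v \<notin> A"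
      using that by (auto simp: D_def)
    show "\<phi> ` A \<in> verts ?Tc" unfolding \<phi>_def by (rule image_id_upd_token_graph[OF u(1) A sep])
    show "inj_on \<phi> A" unfolding \<phi>_def by (rule inj_on_id_upd[OF sep])
  qed
  have "verts ?Tc = (`) \<phi> ` verts ?T1"
  proof (intro equalityI subsetI)
    fix A assume "A \<in> verts ?Tc"
    then have A: "A \<subseteq> verts H - {v}" "card A = k" using verts_Hc by (simp_all add: verts_token_graph)
    then have "A \<in> verts ?T1" "\<phi> ` A = A" by (auto simp: verts_token_graph D_def \<phi>_def)
    then show "A \<in> (`) \<phi> ` verts ?T1" by (metis image_eqI)
  qed (use image_verts in auto)
  moreover have "edges ?Tc = edges (map_graph ((`) \<phi>) ?T1)"
  proof (intro equalityI subsetI)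
    fix X assume "X \<in> edges ?Tc"
    then obtain A B where X: "X = {A, B}" and AB: "A \<in> verts ?Tc" "B \<in> verts ?Tc"
        and adj: "token_adj (edges (map_graph \<phi> H)) A B"
      using Hc by (auto elim: token_graph_edgeE)
    obtain A' B' where "{A', B'} \<in> edges (token_graph k H)" "\<not> (u \<in> A' \<and> v \<in> A')"
        "\<not> (u \<in> B' \<and> v \<in> B')" "\<phi> ` A' = A" "\<phi> ` B' = B"
      using token_adj_identify_lift[OF H u adj[unfolded \<phi>_def] AB[unfolded \<phi>_def]]
      unfolding \<phi>_def by blast
    moreover have "A \<noteq> B" by (rule token_adj_neq[OF adj simple_graph_edge_card[OF Hc]])
    ultimately have "{A', B'} \<in> edges ?T1" "(`) \<phi> ` {A', B'} = X" "card X = 2"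
      unfolding X by (auto simp: D_def)
    then show "X \<in> edges (map_graph ((`) \<phi>) ?T1)" by (metis edges_map_graphI)
  next
    fix X assume "X \<in> edges (map_graph ((`) \<phi>) ?T1)"
    then obtain Y where X: "X = (`) \<phi> ` Y" and Y: "Y \<in> edges ?T1" and card_X: "card X = 2"
      unfolding edges_map_graph by blast
    then have "Y \<in> edges (token_graph k H)" by simp
    then obtain A B where "Y = {A, B}" and "A \<in> verts (token_graph k H)" "B \<in> verts (token_graph k H)"
      and adj: "token_adj (edges H) A B"
      using H by (auto elim: token_graph_edgeE)
    then have X_AB: "X = {\<phi> ` A, \<phi> ` B}" and AB: "A \<in> verts ?T1" "B \<in> verts ?T1"
      using X Y by auto
    then have "\<phi> ` A \<noteq> \<phi> ` B" using card_X by auto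
    then have "token_adj (edges (map_graph \<phi> H)) (\<phi> ` A) (\<phi> ` B)"
      using adj image_verts(2)[OF AB(1)] image_verts(2)[OF AB(2)] by (intro token_adj_image)
    then show "X \<in> edges ?Tc"
      unfolding X_AB using image_verts(1)[OF AB(1)] image_verts(1)[OF AB(2)] by (intro token_graph_edgeI[OF Hc])
  qed
  ultimately show ?thesis by (intro graph_eqI) simp_all
qed

lemma obtainable_token_graph_contract_edge:
  fixes H :: "'a graph" and k :: nat
  assumes H: "simple_graph H" and uv: "{u, v} \<in> edges H" "u \<noteq> v"
  shows "obtainable (token_graph k H) (token_graph k (contract_edge u v H))"
proof -
  define T where "T = token_graph k H"
  define D where "D = {A \<in> verts T. u \<in> A \<and> v \<in> A}"
  define \<phi> where "\<phi> = id(v := u)"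
  define S where "S = {A \<in> verts (delete_vertices D T). v \<in> A}"
  have T: "simple_graph T" unfolding T_def by (rule simple_graph_token_graph[OF H])
  have u: "u \<in> verts H" "v \<in> verts H" using simple_graph_edge_subset[OF H uv(1)] by auto
  have finite: "finite (verts T)" using T by (simp add: simple_graph_def)
  have "obtainable T (delete_vertices D T)"
    using finite by (intro obtainable_delete_vertices) (auto simp: D_def)
  moreover have "obtainable (delete_vertices D T) (map_graph ((`) \<phi>) (delete_vertices D T))"
  proof (rule obtainable_map_graph)
    show "finite S" using finite by (simp add: S_def)
    show "simple_graph (delete_vertices D T)"
      using obtainable_simple_graph[OF \<open>obtainable T (delete_vertices D T)\<close> T] .
  next
    fix A assume "A \<in> verts (delete_vertices D T) - S"
    then have "v \<notin> A" by (auto simp: S_def)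
    then show "\<phi> ` A = A" unfolding \<phi>_def by (rule image_id_upd_notin)
  next
    fix A assume "A \<in> S"
    then have A: "A \<in> verts T" "v \<in> A" "u \<notin> A" by (auto simp: S_def D_def)
    have A_eq: "A = insert v (A - {v})" and \<phi>A: "\<phi> ` A = insert u (A - {v})"
      using A(2) by (auto simp: \<phi>_def image_id_upd_in)
    have "v \<notin> \<phi> ` A" using uv(2) by (simp add: \<phi>A)
    moreover have "finite A" using A(1) u finite_subset[of A "verts H"] H
      by (simp add: T_def verts_token_graph simple_graph_def)
    then have "card (\<phi> ` A) = card A"
      using A(2,3) unfolding \<phi>A by (metis card_Suc_Diff1 card_insert_disjoint finite_Diff Diff_iff)
    then have "\<phi> ` A \<in> verts T"
      using A u unfolding \<phi>A by (auto simp: T_def verts_token_graph)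
    moreover have "token_adj (edges H) A (\<phi> ` A)"
      using A(3) uv(1) unfolding \<phi>A by (subst A_eq) (intro token_adjI, auto simp: insert_commute)
    with A(1) \<open>\<phi> ` A \<in> verts T\<close> have "{A, \<phi> ` A} \<in> edges T"
      unfolding T_def by (rule token_graph_edgeI[OF H])
    ultimately show "\<phi> ` A \<notin> S \<and> {A, \<phi> ` A} \<in> edges (delete_vertices D T)"
      using A by (auto simp: S_def D_def)
  qed
  moreover have "map_graph ((`) \<phi>) (delete_vertices D T) = token_graph k (contract_edge u v H)"
    using token_graph_identify_vertices[OF H u(1) uv(2)] contract_edge_eq_map_graph[OF H u(1) uv(2)]
    unfolding T_def D_def \<phi>_def by simp
  ultimately show ?thesis unfolding T_def by (metis obtainable_trans)
qed

lemma token_graph_map_graph: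
  fixes H :: "'a graph" and g :: "'a \<Rightarrow> 'b"
  assumes H: "simple_graph H" and g: "inj_on g (verts H)"
  shows "token_graph k (map_graph g H) = map_graph ((`) g) (token_graph k H)"
proof -
  have Hg: "simple_graph (map_graph g H)" by (rule simple_graph_map_graph[OF H])
  have token_image: "g ` A \<in> verts (token_graph k (map_graph g H))" if "A \<in> verts (token_graph k H)" for A
    using that g by (auto simp: verts_token_graph card_image inj_on_subset)
  have verts_eq: "verts (token_graph k (map_graph g H)) = (`) g ` verts (token_graph k H)"
  proof (intro equalityI subsetI)
    fix A assume "A \<in> verts (token_graph k (map_graph g H))"
    then obtain A0 where "A0 \<subseteq> verts H" "A = g ` A0" "card A = k"
      by (auto simp: verts_token_graph subset_image_iff)
    moreover from this have "card A0 = k" using g by (simp add: card_image inj_on_subset)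
    ultimately show "A \<in> (`) g ` verts (token_graph k H)" by (auto simp: verts_token_graph)
  qed (use token_image in auto)
  have "edges (token_graph k (map_graph g H)) = edges (map_graph ((`) g) (token_graph k H))"
  proof (intro equalityI subsetI)
    fix X assume "X \<in> edges (token_graph k (map_graph g H))"
    then obtain A B where X: "X = {A, B}" and AB: "A \<in> verts (token_graph k (map_graph g H))"
        "B \<in> verts (token_graph k (map_graph g H))" and adj: "token_adj (edges (map_graph g H)) A B"
      using Hg by (auto elim: token_graph_edgeE)
    obtain A0 B0 where A0: "A0 \<in> verts (token_graph k H)" "A = g ` A0"
      and B0: "B0 \<in> verts (token_graph k H)" "B = g ` B0"
      using AB verts_eq by auto
    have "token_adj (edges H) A0 B0"
      using adj A0 B0 token_adj_map_graph_iff[OF H g] by (simp add: verts_token_graph)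
    with A0(1) B0(1) have "{A0, B0} \<in> edges (token_graph k H)" by (rule token_graph_edgeI[OF H])
    moreover have "A \<noteq> B" by (rule token_adj_neq[OF adj simple_graph_edge_card[OF Hg]])
    then have "(`) g ` {A0, B0} = X" "card X = 2" using X A0 B0 by auto
    ultimately show "X \<in> edges (map_graph ((`) g) (token_graph k H))" by (metis edges_map_graphI)
  next
    fix X assume "X \<in> edges (map_graph ((`) g) (token_graph k H))"
    then obtain Y where X: "X = (`) g ` Y" and Y: "Y \<in> edges (token_graph k H)"
      unfolding edges_map_graph by blast
    then obtain A B where X_AB: "X = {g ` A, g ` B}"
      and AB: "A \<in> verts (token_graph k H)" "B \<in> verts (token_graph k H)"
      and adj: "token_adj (edges H) A B"
      using H by (auto elim: token_graph_edgeE)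
    then have "token_adj (edges (map_graph g H)) (g ` A) (g ` B)"
      using token_adj_map_graph_iff[OF H g] by (simp add: verts_token_graph)
    then show "X \<in> edges (token_graph k (map_graph g H))"
      unfolding X_AB using token_image[OF AB(1)] token_image[OF AB(2)] by (intro token_graph_edgeI[OF Hg])
  qed
  with verts_eq show ?thesis by (intro graph_eqI) simp_all
qed

lemma graph_iso_token_graph:
  assumes "graph_iso G1 G2" shows "graph_iso (token_graph k G1) (token_graph k G2)"
proof -
  have G1: "simple_graph G1" using assms by (simp add: graph_iso_def)
  obtain g where g: "inj_on g (verts G1)" and G2: "G2 = map_graph g G1"
    using assms by (rule graph_iso_imp_map_graph)
  have "inj_on ((`) g) (verts (token_graph k G1))"
    by (intro inj_on_image inj_on_subset[OF g]) (auto simp: verts_token_graph)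
  then show ?thesis
    unfolding G2 token_graph_map_graph[OF G1 g]
    by (intro graph_iso_map_graph simple_graph_token_graph G1)
qed

lemma obtainable_token_graph:
  assumes "obtainable G H" "simple_graph G"
  shows "obtainable (token_graph k G) (token_graph k H)"
  using assms(1)
proof induction
  case refl
  show ?case by (rule obtainable.refl)
next
  case (del_edge H e)
  have H: "simple_graph H" using obtainable_simple_graph[OF del_edge.hyps(1) assms(2)] .
  have "obtainable (token_graph k H) (token_graph k (delete_edge e H))"
    using token_graph_delete_edge[OF H]
    by (intro obtainable_spanning_subgraph simple_graph_token_graph H)
  with del_edge.IH show ?case by (rule obtainable_trans)
next
  case (del_vertex H v)
  have H: "simple_graph H" using obtainable_simple_graph[OF del_vertex.hyps(1) assms(2)] .
  have "finite (verts (token_graph k H))"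
    using simple_graph_token_graph[OF H] by (simp add: simple_graph_def)
  then have "obtainable (token_graph k H) (token_graph k (delete_vertex v H))"
    unfolding token_graph_delete_vertex[OF H] by (intro obtainable_delete_vertices) auto
  with del_vertex.IH show ?case by (rule obtainable_trans)
next
  case (contract H u v)
  have H: "simple_graph H" using obtainable_simple_graph[OF contract.hyps(1) assms(2)] .
  with contract.hyps(2,3) have "obtainable (token_graph k H) (token_graph k (contract_edge u v H))"
    by (intro obtainable_token_graph_contract_edge)
  with contract.IH show ?case by (rule obtainable_trans)
qed

theorem lemma5:
  fixes G :: "'a graph" and G' :: "'b graph" and k :: nat
  assumes "simple_graph G"
    and "minor G' G"
    and "1 \<le> k" and "k < card (verts G')"
  shows "minor (token_graph k G') (token_graph k G)"
proof -
  obtain G0 where "obtainable G G0" "graph_iso G' G0" using assms(2) unfolding minor_def by blast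
  then show ?thesis
    unfolding minor_def using obtainable_token_graph assms(1) graph_iso_token_graph by blast
qed

end
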